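(* Let $\mathcal E$ be a semilattice with zero, $\mathcal B$ a Boolean algebra, $\pi:\mathcal E\to\mathcal B$ a representation, and $\varphi$ a character of $\mathcal E$. Then there exists a character $\chi$ of $\mathcal B$ preserving meets and joins such that $\varphi=\chi\circ\pi$ if and only if $\varphi$ is $\pi$-tight, i.e. for all $n\ge1$ and $x,y_1,\dots,y_n\in\mathcal E$, $$\pi(x)\le\bigvee_{i=1}^n\pi(y_i)\ \Longrightarrow\ \varphi(x)\le\bigvee_{i=1}^n\varphi(y_i).$$
   Context: Boolean algebras need not have a top element: they have finite meets and joins, a bottom element $0$ and relative complements (generalized Boolean algebras). A representation of a semilattice $\mathcal E$ with zero in $\mathcal B$ is a map $\pi$ with $\pi(0)=0$ and $\pi(xy)=\pi(x)\wedge\pi(y)$. A character of $\mathcal E$ is a map $\varphi:\mathcal E\to\{0,1\}$, not identically zero, with $\varphi(0)=0$ and $\varphi(xy)=\varphi(x)\varphi(y)$. A character of $\mathcal B$ preserving meets and joins is a nonzero map $\chi:\mathcal B\to\{0,1\}$ with $\chi(0)=0$, $\chi(a\wedge b)=\chi(a)\wedge\chi(b)$, $\chi(a\vee b)=\chi(a)\vee\chi(b)$. *)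

theory Defs
  imports Main
begin

class gen_boolean_algebra = distrib_lattice + order_bot +
  assumes relative_complement: "a \<le> b \<Longrightarrow> \<exists>c. inf a c = bot \<and> sup a c = b"

text \<open>A semilattice with zero is modelled by the sort {semilattice_inf, order_bot}:
  the product xy is inf x y and the zero is bot.\<close>

definition representation :: "('a::{semilattice_inf,order_bot} \<Rightarrow> 'b::gen_boolean_algebra) \<Rightarrow> bool" where
  "representation \<pi> \<longleftrightarrow> \<pi> bot = bot \<and> (\<forall>x y. \<pi> (inf x y) = inf (\<pi> x) (\<pi> y))"

text \<open>Characters take values in {0,1}, modelled as bool (0 = False, 1 = True).\<close>
definition character :: "('a::{semilattice_inf,order_bot} \<Rightarrow> bool) \<Rightarrow> bool" where
  "character \<phi> \<longleftrightarrow> (\<exists>x. \<phi> x) \<and> \<not> \<phi> bot \<and> (\<forall>x y. \<phi> (inf x y) = (\<phi> x \<and> \<phi> y))"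

definition boolean_character :: "('b::gen_boolean_algebra \<Rightarrow> bool) \<Rightarrow> bool" where
  "boolean_character \<chi> \<longleftrightarrow> (\<exists>a. \<chi> a) \<and> \<not> \<chi> bot
     \<and> (\<forall>a b. \<chi> (inf a b) = (\<chi> a \<and> \<chi> b)) \<and> (\<forall>a b. \<chi> (sup a b) = (\<chi> a \<or> \<chi> b))"

definition tight :: "('a::{semilattice_inf,order_bot} \<Rightarrow> 'b::gen_boolean_algebra) \<Rightarrow> ('a \<Rightarrow> bool) \<Rightarrow> bool" where
  "tight \<pi> \<phi> \<longleftrightarrow> (\<forall>n::nat. n \<ge> 1 \<longrightarrow> (\<forall>x (y::nat \<Rightarrow> 'a).
      \<pi> x \<le> Sup_fin ((\<lambda>i. \<pi> (y i)) ` {1..n}) \<longrightarrow> \<phi> x \<le> Sup_fin ((\<lambda>i. \<phi> (y i)) ` {1..n})))"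

end

theory Submission
  imports Defs
begin

text \<open>A character \<open>\<chi>\<close> of \<open>\<B>\<close> is the indicator of a proper prime filter, and
  \<open>\<phi> = \<chi> \<circ> \<pi>\<close> says that this filter contains the filter generated by \<open>\<pi>\<close> of the support of
  \<open>\<phi>\<close> and misses the ideal generated by \<open>\<pi>\<close> of its complement. Tightness is exactly the
  disjointness of these two, and the prime filter theorem for distributive lattices
  (by Zorn's lemma) then produces \<open>\<chi>\<close>.\<close>

definition lattice_filter :: "'a::semilattice_inf set \<Rightarrow> bool" where
  "lattice_filter G \<longleftrightarrow> (\<forall>a\<in>G. \<forall>b. a \<le> b \<longrightarrow> b \<in> G) \<and> (\<forall>a\<in>G. \<forall>b\<in>G. inf a b \<in> G)"

definition lattice_ideal :: "'a::semilattice_sup set \<Rightarrow> bool" where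
  "lattice_ideal I \<longleftrightarrow> (\<forall>a\<in>I. \<forall>b. b \<le> a \<longrightarrow> b \<in> I) \<and> (\<forall>a\<in>I. \<forall>b\<in>I. sup a b \<in> I)"

definition prime_set :: "'a::semilattice_sup set \<Rightarrow> bool" where
  "prime_set G \<longleftrightarrow> (\<forall>a b. sup a b \<in> G \<longrightarrow> a \<in> G \<or> b \<in> G)"

lemma Union_chain_lattice_filter:
  assumes "C \<in> chains {G. lattice_filter G}"
  shows "lattice_filter (\<Union>C)"
proof -
  have filters: "\<And>G. G \<in> C \<Longrightarrow> lattice_filter G"
    and chain: "\<And>G H. G \<in> C \<Longrightarrow> H \<in> C \<Longrightarrow> G \<subseteq> H \<or> H \<subseteq> G"
    using assms unfolding chains_def chain_subset_def by auto
  have "inf a b \<in> \<Union>C" if "a \<in> G" "b \<in> H" "G \<in> C" "H \<in> C" for a b G H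
    using chain[OF that(3,4)] filters that unfolding lattice_filter_def by blast
  then show ?thesis
    using filters unfolding lattice_filter_def by blast
qed

lemma maximal_filter_disjoint_ideal_exists:
  assumes "lattice_filter F" "F \<inter> I = {}"
  obtains G where "F \<subseteq> G" "lattice_filter G" "G \<inter> I = {}"
    "\<And>H. lattice_filter H \<Longrightarrow> H \<inter> I = {} \<Longrightarrow> G \<subseteq> H \<Longrightarrow> H = G"
proof -
  let ?A = "{G. F \<subseteq> G \<and> lattice_filter G \<and> G \<inter> I = {}}"
  have "\<exists>U\<in>?A. \<forall>G\<in>C. G \<subseteq> U" if chain: "C \<in> chains ?A" for C
  proof (cases "C = {}")
    case True
    then show ?thesis
      using assms by auto
  next
    case False
    have "C \<subseteq> ?A"
      using chain by (simp add: chains_def)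
    then have "C \<in> chains {G. lattice_filter G}"
      using chain by (auto simp: chains_def)
    then have "lattice_filter (\<Union>C)"
      by (rule Union_chain_lattice_filter)
    moreover have "F \<subseteq> \<Union>C" "\<Union>C \<inter> I = {}"
      using False \<open>C \<subseteq> ?A\<close> by auto
    ultimately show ?thesis
      by auto
  qed
  then have "\<exists>G\<in>?A. \<forall>H\<in>?A. G \<subseteq> H \<longrightarrow> H = G"
    by (intro Zorn_Lemma2 ballI)
  then obtain G where "G \<in> ?A" and maximal: "\<forall>H\<in>?A. G \<subseteq> H \<longrightarrow> H = G" ..
  then show ?thesis
    by (intro that[of G]) auto
qed

lemma maximal_filter_meets_ideal:
  fixes G :: "'a::lattice set"
  assumes "lattice_filter G" "G \<noteq> {}" "lattice_ideal I" "G \<inter> I = {}"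
    and maximal: "\<And>H. lattice_filter H \<Longrightarrow> H \<inter> I = {} \<Longrightarrow> G \<subseteq> H \<Longrightarrow> H = G"
    and "a \<notin> G"
  shows "\<exists>g\<in>G. inf g a \<in> I"
proof (rule ccontr)
  assume disjoint: "\<not> (\<exists>g\<in>G. inf g a \<in> I)"
  define H where "H = {c. \<exists>g\<in>G. inf g a \<le> c}"
  have "lattice_filter H"
    unfolding lattice_filter_def H_def
  proof (intro conjI ballI allI impI)
    fix c d assume "c \<in> {c. \<exists>g\<in>G. inf g a \<le> c}" "d \<in> {c. \<exists>g\<in>G. inf g a \<le> c}"
    then obtain g h where gh: "g \<in> G" "h \<in> G" "inf g a \<le> c" "inf h a \<le> d" by auto
    have "inf (inf g h) a = inf (inf g a) (inf h a)"
      by (simp add: inf_aci)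
    also have "\<dots> \<le> inf c d"
      using gh(3,4) by (rule inf_mono)
    finally have "inf (inf g h) a \<le> inf c d" .
    moreover have "inf g h \<in> G"
      using assms(1) gh unfolding lattice_filter_def by blast
    ultimately show "inf c d \<in> {c. \<exists>g\<in>G. inf g a \<le> c}" by blast
  qed (auto intro: order_trans)
  moreover have "H \<inter> I = {}"
    using disjoint assms(3) unfolding H_def lattice_ideal_def by blast
  moreover have "G \<subseteq> H"
    unfolding H_def by (auto intro: le_infI1)
  ultimately have "H = G" by (rule maximal)
  moreover have "a \<in> H"
    using assms(2) unfolding H_def by auto
  ultimately show False
    using assms(6) by simp
qed

lemma maximal_filter_disjoint_ideal_prime:
  fixes G :: "'a::distrib_lattice set"
  assumes "lattice_filter G" "G \<noteq> {}" "lattice_ideal I" "G \<inter> I = {}"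
    and maximal: "\<And>H. lattice_filter H \<Longrightarrow> H \<inter> I = {} \<Longrightarrow> G \<subseteq> H \<Longrightarrow> H = G"
  shows "prime_set G"
  unfolding prime_set_def
proof (intro allI impI, rule ccontr)
  fix a b assume ab: "sup a b \<in> G" "\<not> (a \<in> G \<or> b \<in> G)"
  then obtain g h where g: "g \<in> G" "inf g a \<in> I" and h: "h \<in> G" "inf h b \<in> I"
    using maximal_filter_meets_ideal[OF assms] by blast
  have "inf (inf g h) (sup a b) \<in> G"
    using assms(1) g(1) h(1) ab(1) unfolding lattice_filter_def by blast
  have "inf (inf g h) (sup a b) = sup (inf (inf g h) a) (inf (inf g h) b)"
    by (rule inf_sup_distrib1)
  also have "\<dots> \<le> sup (inf g a) (inf h b)"
    by (intro sup_mono inf_mono) simp_all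
  finally have "inf (inf g h) (sup a b) \<in> I"
    using assms(3) g(2) h(2) unfolding lattice_ideal_def by blast
  with \<open>inf (inf g h) (sup a b) \<in> G\<close> show False
    using assms(4) by blast
qed

theorem prime_filter_theorem:
  fixes F :: "'a::distrib_lattice set"
  assumes "lattice_filter F" "F \<noteq> {}" "lattice_ideal I" "F \<inter> I = {}"
  obtains G where "F \<subseteq> G" "lattice_filter G" "prime_set G" "G \<inter> I = {}"
proof -
  obtain G where G: "F \<subseteq> G" "lattice_filter G" "G \<inter> I = {}"
    and maximal: "\<And>H. lattice_filter H \<Longrightarrow> H \<inter> I = {} \<Longrightarrow> G \<subseteq> H \<Longrightarrow> H = G"
    using maximal_filter_disjoint_ideal_exists[OF assms(1,4)] by blast
  moreover have "prime_set G"
    using maximal_filter_disjoint_ideal_prime[OF G(2) _ assms(3) G(3) maximal] G(1) assms(2) by blast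
  ultimately show ?thesis
    using that by blast
qed

lemma boolean_character_prime_filter:
  fixes G :: "'b::gen_boolean_algebra set"
  assumes "lattice_filter G" "prime_set G" "G \<noteq> {}" "bot \<notin> G"
  shows "boolean_character (\<lambda>b. b \<in> G)"
proof -
  have up: "\<And>a b. a \<in> G \<Longrightarrow> a \<le> b \<Longrightarrow> b \<in> G"
    and meet: "\<And>a b. a \<in> G \<Longrightarrow> b \<in> G \<Longrightarrow> inf a b \<in> G"
    using assms(1) unfolding lattice_filter_def by auto
  have "inf a b \<in> G \<longleftrightarrow> a \<in> G \<and> b \<in> G" for a b
    using up[of "inf a b" a] up[of "inf a b" b] meet[of a b] by auto
  moreover have "sup a b \<in> G \<longleftrightarrow> a \<in> G \<or> b \<in> G" for a b
    using up[of a "sup a b"] up[of b "sup a b"] assms(2) unfolding prime_set_def by auto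
  ultimately show ?thesis
    using assms(3,4) unfolding boolean_character_def by auto
qed

lemma boolean_character_Sup_fin:
  assumes "boolean_character \<chi>" "finite A" "A \<noteq> {}"
  shows "\<chi> (Sup_fin A) \<longleftrightarrow> (\<exists>a\<in>A. \<chi> a)"
  using assms(2,3)
proof (induction A rule: finite_ne_induct)
  case (insert a A)
  then show ?case
    using assms(1) by (simp add: boolean_character_def)
qed simp

lemma boolean_character_mono:
  assumes "boolean_character \<chi>" "a \<le> b" "\<chi> a"
  shows "\<chi> b"
proof -
  have "\<chi> (sup a b) \<longleftrightarrow> \<chi> a \<or> \<chi> b"
    using assms(1) by (simp add: boolean_character_def)
  then show ?thesis
    using assms(2,3) by (simp add: sup.absorb2)
qed

lemma tight_iff_finite_sets:
  "tight \<pi> \<phi> \<longleftrightarrow>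
    (\<forall>x S. finite S \<longrightarrow> S \<noteq> {} \<longrightarrow> \<pi> x \<le> Sup_fin (\<pi> ` S) \<longrightarrow> \<phi> x \<longrightarrow> (\<exists>y\<in>S. \<phi> y))"
proof -
  have Sup_fin_bool: "Sup_fin ((\<lambda>i. \<phi> (y i)) ` {1..n}) \<longleftrightarrow> (\<exists>i\<in>{1..n}. \<phi> (y i))"
    if "n \<ge> 1" for n and y :: "nat \<Rightarrow> _"
    using that by (simp add: Sup_fin_Sup)
  show ?thesis
  proof
    assume tight: "tight \<pi> \<phi>"
    show "\<forall>x S. finite S \<longrightarrow> S \<noteq> {} \<longrightarrow> \<pi> x \<le> Sup_fin (\<pi> ` S) \<longrightarrow> \<phi> x \<longrightarrow> (\<exists>y\<in>S. \<phi> y)"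
    proof (intro allI impI)
      fix x S assume S: "finite S" "S \<noteq> {}" "\<pi> x \<le> Sup_fin (\<pi> ` S)" "\<phi> x"
      obtain y where y: "bij_betw y {1..card S} S"
        using ex_bij_betw_nat_finite_1[OF S(1)] by blast
      have "card S \<ge> 1"
        using S(1,2) by (simp add: Suc_le_eq card_gt_0_iff)
      moreover have "(\<lambda>i. \<pi> (y i)) ` {1..card S} = \<pi> ` S"
        using y by (simp add: bij_betw_def image_image[symmetric])
      ultimately show "\<exists>z\<in>S. \<phi> z"
        using tight S(3,4) y Sup_fin_bool unfolding tight_def bij_betw_def by fastforce
    qed
  next
    assume sets: "\<forall>x S. finite S \<longrightarrow> S \<noteq> {} \<longrightarrow> \<pi> x \<le> Sup_fin (\<pi> ` S) \<longrightarrow> \<phi> x \<longrightarrow> (\<exists>y\<in>S. \<phi> y)"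
    show "tight \<pi> \<phi>"
      unfolding tight_def
    proof (intro allI impI)
      fix n :: nat and x y
      assume "n \<ge> 1" "\<pi> x \<le> Sup_fin ((\<lambda>i. \<pi> (y i)) ` {1..n})"
      then show "\<phi> x \<le> Sup_fin ((\<lambda>i. \<phi> (y i)) ` {1..n})"
        using sets[rule_format, of "y ` {1..n}" x] Sup_fin_bool by (auto simp: image_image)
    qed
  qed
qed

lemma tight_comp_boolean_character:
  assumes "boolean_character \<chi>"
  shows "tight \<pi> (\<chi> \<circ> \<pi>)"
  unfolding tight_iff_finite_sets
proof (intro allI impI)
  fix x S assume S: "finite S" "S \<noteq> {}" "\<pi> x \<le> Sup_fin (\<pi> ` S)" "(\<chi> \<circ> \<pi>) x"
  then have "\<chi> (Sup_fin (\<pi> ` S))"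
    using boolean_character_mono[OF assms] by auto
  then show "\<exists>y\<in>S. (\<chi> \<circ> \<pi>) y"
    using boolean_character_Sup_fin[OF assms] S(1,2) by auto
qed

context
  fixes \<pi> :: "'a::{semilattice_inf,order_bot} \<Rightarrow> 'b::gen_boolean_algebra"
    and \<phi> :: "'a \<Rightarrow> bool"
  assumes representation: "representation \<pi>" and character: "character \<phi>"
begin

definition support_filter :: "'b set" where
  "support_filter = {b. \<exists>x. \<phi> x \<and> \<pi> x \<le> b}"

definition kernel_ideal :: "'b set" where
  "kernel_ideal = {b. \<exists>S. finite S \<and> S \<noteq> {} \<and> (\<forall>y\<in>S. \<not> \<phi> y) \<and> b \<le> Sup_fin (\<pi> ` S)}"

lemma lattice_filter_support_filter: "lattice_filter support_filter"
  unfolding lattice_filter_def support_filter_def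
proof (intro conjI ballI allI impI)
  fix a b assume "a \<in> {b. \<exists>x. \<phi> x \<and> \<pi> x \<le> b}" "b \<in> {b. \<exists>x. \<phi> x \<and> \<pi> x \<le> b}"
  then obtain x y where "\<phi> x" "\<pi> x \<le> a" "\<phi> y" "\<pi> y \<le> b" by auto
  moreover have "\<pi> (inf x y) = inf (\<pi> x) (\<pi> y)" "\<phi> (inf x y) = (\<phi> x \<and> \<phi> y)"
    using representation character unfolding representation_def character_def by auto
  ultimately have "\<phi> (inf x y) \<and> \<pi> (inf x y) \<le> inf a b"
    by (auto intro: le_infI1 le_infI2)
  then show "inf a b \<in> {b. \<exists>x. \<phi> x \<and> \<pi> x \<le> b}"
    by blast
qed (auto intro: order_trans)

lemma lattice_ideal_kernel_ideal: "lattice_ideal kernel_ideal"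
  unfolding lattice_ideal_def kernel_ideal_def
proof (intro conjI ballI allI impI)
  fix a b
  assume "a \<in> {b. \<exists>S. finite S \<and> S \<noteq> {} \<and> (\<forall>y\<in>S. \<not> \<phi> y) \<and> b \<le> Sup_fin (\<pi> ` S)}"
    "b \<in> {b. \<exists>S. finite S \<and> S \<noteq> {} \<and> (\<forall>y\<in>S. \<not> \<phi> y) \<and> b \<le> Sup_fin (\<pi> ` S)}"
  then obtain S T where S: "finite S" "S \<noteq> {}" "\<forall>y\<in>S. \<not> \<phi> y" "a \<le> Sup_fin (\<pi> ` S)"
    and T: "finite T" "T \<noteq> {}" "\<forall>y\<in>T. \<not> \<phi> y" "b \<le> Sup_fin (\<pi> ` T)"
    by auto
  have "Sup_fin (\<pi> ` (S \<union> T)) = sup (Sup_fin (\<pi> ` S)) (Sup_fin (\<pi> ` T))"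
    using S T by (simp add: image_Un Sup_fin.union)
  then have "sup a b \<le> Sup_fin (\<pi> ` (S \<union> T))"
    using S(4) T(4) by (simp add: le_supI1 le_supI2)
  then show "sup a b \<in> {b. \<exists>S. finite S \<and> S \<noteq> {} \<and> (\<forall>y\<in>S. \<not> \<phi> y) \<and> b \<le> Sup_fin (\<pi> ` S)}"
    using S T by (intro CollectI exI[of _ "S \<union> T"]) auto
qed (auto intro: order_trans)

lemma tight_iff_disjoint: "tight \<pi> \<phi> \<longleftrightarrow> support_filter \<inter> kernel_ideal = {}"
  unfolding tight_iff_finite_sets support_filter_def kernel_ideal_def
  by (blast intro: order_trans)

lemma support_filter_nonempty: "support_filter \<noteq> {}"
  using character unfolding character_def support_filter_def by auto

lemma bot_in_kernel_ideal: "bot \<in> kernel_ideal"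
  using character unfolding character_def kernel_ideal_def by (auto intro!: exI[of _ "{bot}"])

lemma character_eq_mem_comp:
  assumes "support_filter \<subseteq> G" "G \<inter> kernel_ideal = {}"
  shows "\<phi> = (\<lambda>b. b \<in> G) \<circ> \<pi>"
proof
  fix x
  have "\<phi> x \<Longrightarrow> \<pi> x \<in> support_filter" "\<not> \<phi> x \<Longrightarrow> \<pi> x \<in> kernel_ideal"
    unfolding support_filter_def kernel_ideal_def by (auto intro!: exI[of _ "{x}"])
  then show "\<phi> x = ((\<lambda>b. b \<in> G) \<circ> \<pi>) x"
    using assms by auto
qed

lemma tight_imp_factors_through_boolean_character:
  assumes "tight \<pi> \<phi>"
  shows "\<exists>\<chi>. boolean_character \<chi> \<and> \<phi> = \<chi> \<circ> \<pi>"
proof -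
  obtain G where G: "support_filter \<subseteq> G" "lattice_filter G" "prime_set G" "G \<inter> kernel_ideal = {}"
    using prime_filter_theorem[OF lattice_filter_support_filter support_filter_nonempty
        lattice_ideal_kernel_ideal] assms tight_iff_disjoint by blast
  then have "boolean_character (\<lambda>b. b \<in> G)"
    using support_filter_nonempty bot_in_kernel_ideal by (intro boolean_character_prime_filter) auto
  with G show ?thesis
    using character_eq_mem_comp by blast
qed

end

theorem theorem15p11:
  fixes \<pi> :: "'a::{semilattice_inf,order_bot} \<Rightarrow> 'b::gen_boolean_algebra"
    and \<phi> :: "'a \<Rightarrow> bool"
  assumes "representation \<pi>" and "character \<phi>"
  shows "(\<exists>\<chi>. boolean_character \<chi> \<and> \<phi> = \<chi> \<circ> \<pi>) \<longleftrightarrow> tight \<pi> \<phi>"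
  using tight_comp_boolean_character tight_imp_factors_through_boolean_character[OF assms]
  by blast

end
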